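(* Let $X\in\{A_4,D_6,E_8\}$ with rank $n\in\{4,6,8\}$, and let $\alpha_1,\dots,\alpha_n$ be a basis of $\mathbb{R}^n$ equipped with an inner product $(\cdot\mid\cdot)$ such that $(\alpha_i\mid\alpha_i)=2$ and $2(\alpha_i\mid\alpha_j)/(\alpha_i\mid\alpha_i)$ is the Cartan matrix of $X$. Then there is no simply-laced affine double extension of $X$ with trivial projection kernel; that is, there do not exist vectors $\beta,\gamma\in\mathbb{R}^n=\mathrm{span}(\alpha_1,\dots,\alpha_n)$ such that the $(n+2)\times(n+2)$ matrix $C_{uv}=2(u\mid v)/(u\mid u)$, $u,v\in(\beta,\gamma,\alpha_1,\dots,\alpha_n)$, is a simply-laced Kac–Moody-type extension of the Cartan matrix of $X$ by two nodes, i.e. has all diagonal entries $2$, all off-diagonal entries in $\{0,-1\}$ (with $(\beta\mid\beta)=(\gamma\mid\gamma)=2$), and $\det C=0$.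
   Context: Dynkin labellings: $A_4$: chain $\alpha_1-\alpha_2-\alpha_3-\alpha_4$; $D_6$: chain $\alpha_1-\cdots-\alpha_5$ with $\alpha_6$ joined to $\alpha_4$; $E_8$: chain $\alpha_1-\cdots-\alpha_7$ with $\alpha_8$ joined to $\alpha_5$. The Cartan matrix of these simply-laced diagrams has diagonal entries $2$, entries $-1$ for joined nodes and $0$ otherwise. "Trivial projection kernel" means that both additional roots lie in the span of the simple roots of $X$ (so that they can be projected with the same linear projection as the roots of $X$). *)

theory Defs
  imports "HOL-Analysis.Inner_Product" "Jordan_Normal_Form.Determinant"
begin

datatype dynkin = A4 | D6 | E8

fun rank :: "dynkin \<Rightarrow> nat" where
  "rank A4 = 4" | "rank D6 = 6" | "rank E8 = 8"

fun joined :: "dynkin \<Rightarrow> nat \<Rightarrow> nat \<Rightarrow> bool" where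
  "joined A4 i j = (i \<in> {1..4} \<and> j \<in> {1..4} \<and> (i = j + 1 \<or> j = i + 1))"
| "joined D6 i j = (i \<in> {1..6} \<and> j \<in> {1..6} \<and>
      ((i \<le> 5 \<and> j \<le> 5 \<and> (i = j + 1 \<or> j = i + 1)) \<or> {i, j} = {4, 6}))"
| "joined E8 i j = (i \<in> {1..8} \<and> j \<in> {1..8} \<and>
      ((i \<le> 7 \<and> j \<le> 7 \<and> (i = j + 1 \<or> j = i + 1)) \<or> {i, j} = {5, 8}))"

definition cartan :: "dynkin \<Rightarrow> nat \<Rightarrow> nat \<Rightarrow> real" where
  "cartan X i j = (if i = j then 2 else if joined X i j then -1 else 0)"

definition ext_family :: "'a \<Rightarrow> 'a \<Rightarrow> (nat \<Rightarrow> 'a) \<Rightarrow> nat \<Rightarrow> 'a" where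
  "ext_family \<beta> \<gamma> \<alpha> k = (if k = 0 then \<beta> else if k = 1 then \<gamma> else \<alpha> (k - 1))"

definition cartan_of :: "nat \<Rightarrow> (nat \<Rightarrow> 'a::real_inner) \<Rightarrow> real mat" where
  "cartan_of N u = mat N N (\<lambda>(i, j). 2 * inner (u i) (u j) / inner (u i) (u i))"

end

theory Submission
  imports Defs "HOL-Analysis.Linear_Algebra"
begin

text \<open>Write \<open>\<beta> = \<Sum> c\<^sub>i \<alpha>\<^sub>i\<close> and \<open>d\<^sub>j = (\<beta> | \<alpha>\<^sub>j)\<close>. Then \<open>d = A c\<close> for the
  Cartan matrix \<open>A\<close> of \<open>X\<close>, so \<open>c = A\<^sup>-\<^sup>1 d\<close> and \<open>(\<beta> | \<beta>) = d\<^sup>T A\<^sup>-\<^sup>1 d\<close>.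
  For \<open>X = A\<^sub>4, D\<^sub>6, E\<^sub>8\<close> a finite check shows that the only \<open>d \<in> {0, -1}\<^sup>n\<close>
  with \<open>d\<^sup>T A\<^sup>-\<^sup>1 d = 2\<close> is minus the pairing of the highest root with the simple roots.
  Hence the two added roots \<open>\<beta>\<close>, \<open>\<gamma>\<close> have the same inner products with a basis, so
  \<open>\<beta> = \<gamma>\<close>; but then \<open>(\<beta> | \<gamma>) = 2\<close>, which is not an admissible off-diagonal entry.\<close>

text \<open>The nodes joined to the extra node of the affine diagram, i.e. those \<open>j\<close> with
  \<open>(\<theta> | \<alpha>\<^sub>j) = 1\<close> for the highest root \<open>\<theta>\<close>.\<close>
fun attached :: "dynkin \<Rightarrow> nat \<Rightarrow> bool" where
  "attached A4 j = (j = 1 \<or> j = 4)"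
| "attached D6 j = (j = 2)"
| "attached E8 j = (j = 1)"

fun cartan_inv_rows :: "dynkin \<Rightarrow> real list list" where
  "cartan_inv_rows A4 = map (map (\<lambda>x. x / 5))
     [[4, 3, 2, 1], [3, 6, 4, 2], [2, 4, 6, 3], [1, 2, 3, 4]]"
| "cartan_inv_rows D6 = map (map (\<lambda>x. x / 2))
     [[2, 2, 2, 2, 1, 1], [2, 4, 4, 4, 2, 2], [2, 4, 6, 6, 3, 3],
      [2, 4, 6, 8, 4, 4], [1, 2, 3, 4, 3, 2], [1, 2, 3, 4, 2, 3]]"
| "cartan_inv_rows E8 =
     [[2, 3, 4, 5, 6, 4, 2, 3], [3, 6, 8, 10, 12, 8, 4, 6], [4, 8, 12, 15, 18, 12, 6, 9],
      [5, 10, 15, 20, 24, 16, 8, 12], [6, 12, 18, 24, 30, 20, 10, 15],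
      [4, 8, 12, 16, 20, 14, 7, 10], [2, 4, 6, 8, 10, 7, 4, 5], [3, 6, 9, 12, 15, 10, 5, 8]]"

definition cartan_inv :: "dynkin \<Rightarrow> nat \<Rightarrow> nat \<Rightarrow> real" where
  "cartan_inv X i j = cartan_inv_rows X ! (i - 1) ! (j - 1)"

lemma nodes_eq:
  "{1..4::nat} = {1, 2, 3, 4}"
  "{1..6::nat} = {1, 2, 3, 4, 5, 6}"
  "{1..8::nat} = {1, 2, 3, 4, 5, 6, 7, 8}"
  by auto

lemma cartan_mult_cartan_inv:
  assumes "i \<in> {1..rank X}" "j \<in> {1..rank X}"
  shows "(\<Sum>k\<in>{1..rank X}. cartan X i k * cartan_inv X k j) = (if i = j then 1 else 0)"
  using assms
  by (cases X; simp only: rank.simps nodes_eq; elim insertE emptyE;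
      simp add: cartan_def cartan_inv_def doubleton_eq_iff)

lemma cartan_inv_form_eq_two:
  assumes "\<forall>j\<in>{1..rank X}. d j \<in> {0, -1}"
    and "(\<Sum>i\<in>{1..rank X}. (\<Sum>j\<in>{1..rank X}. d j * cartan_inv X j i) * d i) = 2"
  shows "\<forall>j\<in>{1..rank X}. d j = (if attached X j then -1 else 0)"
proof (cases X)
  case A4
  show ?thesis using assms unfolding A4
    by (simp only: rank.simps nodes_eq) (simp add: cartan_inv_def; elim conjE disjE; simp)
next
  case D6
  show ?thesis using assms unfolding D6
    by (simp only: rank.simps nodes_eq) (simp add: cartan_inv_def; elim conjE disjE; simp)
next
  case E8
  show ?thesis using assms unfolding E8
    by (simp only: rank.simps nodes_eq) (simp add: cartan_inv_def; elim conjE disjE; simp)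
qed

lemma coefficients_from_pairings:
  fixes A G :: "'i \<Rightarrow> 'i \<Rightarrow> real" and c d :: "'i \<Rightarrow> real"
  assumes "finite I"
    and pairing: "\<forall>j\<in>I. (\<Sum>i\<in>I. c i * A i j) = d j"
    and right_inverse: "\<forall>i\<in>I. \<forall>j\<in>I. (\<Sum>k\<in>I. A i k * G k j) = (if i = j then 1 else 0)"
    and "l \<in> I"
  shows "c l = (\<Sum>j\<in>I. d j * G j l)"
proof -
  have "(\<Sum>j\<in>I. d j * G j l) = (\<Sum>j\<in>I. (\<Sum>i\<in>I. c i * A i j) * G j l)"
    using pairing by simp
  also have "\<dots> = (\<Sum>j\<in>I. \<Sum>i\<in>I. c i * (A i j * G j l))"
    by (simp add: sum_distrib_right mult.assoc)
  also have "\<dots> = (\<Sum>i\<in>I. c i * (\<Sum>j\<in>I. A i j * G j l))"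
    by (subst sum.swap) (simp add: sum_distrib_left)
  also have "\<dots> = (\<Sum>i\<in>I. c i * (if i = l then 1 else 0))"
    using right_inverse \<open>l \<in> I\<close> by simp
  also have "\<dots> = c l"
    using \<open>finite I\<close> \<open>l \<in> I\<close> by (simp add: if_distrib cong: if_cong)
  finally show ?thesis ..
qed

lemma span_image_combination:
  fixes \<alpha> :: "'i \<Rightarrow> 'a::real_vector"
  assumes "inj_on \<alpha> I" "finite I" "x \<in> span (\<alpha> ` I)"
  obtains c where "x = (\<Sum>i\<in>I. c i *\<^sub>R \<alpha> i)"
proof -
  obtain u where "x = (\<Sum>v\<in>\<alpha> ` I. u v *\<^sub>R v)"
    using assms(2,3) span_finite[of "\<alpha> ` I"] by auto
  also have "\<dots> = (\<Sum>i\<in>I. u (\<alpha> i) *\<^sub>R \<alpha> i)"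
    using sum.reindex[OF assms(1)] by simp
  finally show ?thesis by (rule that)
qed

lemma eq_if_inner_eq_on_spanning:
  fixes x y :: "'a::real_inner"
  assumes "span S = UNIV" and "\<forall>s\<in>S. inner x s = inner y s"
  shows "x = y"
proof -
  have "orthogonal (x - y) (x - y)"
    using orthogonal_to_span[of "x - y" S "x - y"] assms
    by (simp add: orthogonal_def inner_diff_left)
  then show ?thesis by (simp add: orthogonal_self)
qed

lemma pairings_eq_attached:
  fixes \<alpha> :: "nat \<Rightarrow> 'a::real_inner"
  assumes inj: "inj_on \<alpha> {1..rank X}"
    and spans: "span (\<alpha> ` {1..rank X}) = UNIV"
    and gram: "\<forall>i\<in>{1..rank X}. \<forall>j\<in>{1..rank X}. inner (\<alpha> i) (\<alpha> j) = cartan X i j"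
    and norm: "inner \<beta> \<beta> = 2"
    and pairings: "\<forall>j\<in>{1..rank X}. inner \<beta> (\<alpha> j) \<in> {0, -1}"
  shows "\<forall>j\<in>{1..rank X}. inner \<beta> (\<alpha> j) = (if attached X j then -1 else 0)"
proof -
  define N where "N = {1..rank X}"
  obtain c where \<beta>: "\<beta> = (\<Sum>i\<in>N. c i *\<^sub>R \<alpha> i)"
    using span_image_combination[OF inj _ , of \<beta>] spans unfolding N_def by auto
  have inner_\<beta>: "inner \<beta> x = (\<Sum>i\<in>N. c i * inner (\<alpha> i) x)" for x
    unfolding \<beta> by (simp add: inner_sum_left)
  have pairing: "(\<Sum>i\<in>N. c i * cartan X i j) = inner \<beta> (\<alpha> j)" if "j \<in> N" for j
    unfolding inner_\<beta> using gram that unfolding N_def by (intro sum.cong) auto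
  have coeff: "c l = (\<Sum>j\<in>N. inner \<beta> (\<alpha> j) * cartan_inv X j l)" if "l \<in> N" for l
  proof (rule coefficients_from_pairings[where A = "cartan X"])
    show "finite N" unfolding N_def by simp
    show "\<forall>j\<in>N. (\<Sum>i\<in>N. c i * cartan X i j) = inner \<beta> (\<alpha> j)"
      using pairing by blast
    show "\<forall>i\<in>N. \<forall>j\<in>N. (\<Sum>k\<in>N. cartan X i k * cartan_inv X k j) = (if i = j then 1 else 0)"
      unfolding N_def using cartan_mult_cartan_inv by blast
  qed (fact that)
  have "inner \<beta> \<beta> = (\<Sum>l\<in>N. (\<Sum>j\<in>N. inner \<beta> (\<alpha> j) * cartan_inv X j l) * inner \<beta> (\<alpha> l))"
    unfolding inner_\<beta>[of \<beta>] by (intro sum.cong) (simp_all add: coeff inner_commute)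
  with norm have "(\<Sum>l\<in>N. (\<Sum>j\<in>N. inner \<beta> (\<alpha> j) * cartan_inv X j l) * inner \<beta> (\<alpha> l)) = 2"
    by simp
  with pairings show ?thesis
    unfolding N_def by (rule cartan_inv_form_eq_two)
qed

lemma ext_family_pairings:
  fixes \<alpha> :: "nat \<Rightarrow> 'a::real_inner"
  assumes off: "\<forall>i<n + 2. \<forall>j<n + 2. i \<noteq> j \<longrightarrow>
      cartan_of (n + 2) (ext_family \<beta> \<gamma> \<alpha>) $$ (i, j) \<in> {0, -1}"
    and \<beta>\<beta>: "inner \<beta> \<beta> = 2" and \<gamma>\<gamma>: "inner \<gamma> \<gamma> = 2"
  shows "inner \<beta> \<gamma> \<in> {0, -1}"
    and "\<forall>j\<in>{1..n}. inner \<beta> (\<alpha> j) \<in> {0, -1}"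
    and "\<forall>j\<in>{1..n}. inner \<gamma> (\<alpha> j) \<in> {0, -1}"
proof -
  show "inner \<beta> \<gamma> \<in> {0, -1}"
    using off[rule_format, of 0 1] \<beta>\<beta> by (simp add: cartan_of_def ext_family_def)
  show "\<forall>j\<in>{1..n}. inner \<beta> (\<alpha> j) \<in> {0, -1}"
  proof
    fix j assume "j \<in> {1..n}"
    then show "inner \<beta> (\<alpha> j) \<in> {0, -1}"
      using off[rule_format, of 0 "j + 1"] \<beta>\<beta> by (simp add: cartan_of_def ext_family_def)
  qed
  show "\<forall>j\<in>{1..n}. inner \<gamma> (\<alpha> j) \<in> {0, -1}"
  proof
    fix j assume "j \<in> {1..n}"
    then show "inner \<gamma> (\<alpha> j) \<in> {0, -1}"
      using off[rule_format, of 1 "j + 1"] \<gamma>\<gamma> by (simp add: cartan_of_def ext_family_def)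
  qed
qed

theorem mainTheorem4:
  fixes X :: dynkin and \<alpha> :: "nat \<Rightarrow> 'a::real_inner"
  assumes inj: "inj_on \<alpha> {1..rank X}"
    and indep: "independent (\<alpha> ` {1..rank X})"
    and spans: "span (\<alpha> ` {1..rank X}) = UNIV"
    and cartan: "\<forall>i\<in>{1..rank X}. \<forall>j\<in>{1..rank X}.
                   2 * inner (\<alpha> i) (\<alpha> j) / inner (\<alpha> i) (\<alpha> i) = cartan X i j"
    and norm2: "\<forall>i\<in>{1..rank X}. inner (\<alpha> i) (\<alpha> i) = 2"
  shows "\<not> (\<exists>\<beta> \<gamma> :: 'a.
            inner \<beta> \<beta> = 2 \<and> inner \<gamma> \<gamma> = 2 \<and>
            (let C = cartan_of (rank X + 2) (ext_family \<beta> \<gamma> \<alpha>) in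
              (\<forall>i<rank X + 2. C $$ (i, i) = 2) \<and>
              (\<forall>i<rank X + 2. \<forall>j<rank X + 2. i \<noteq> j \<longrightarrow> C $$ (i, j) \<in> {0, -1}) \<and>
              det C = 0))"
proof -
  have gram: "\<forall>i\<in>{1..rank X}. \<forall>j\<in>{1..rank X}. inner (\<alpha> i) (\<alpha> j) = cartan X i j"
    using cartan norm2 by simp
  have False
    if \<beta>\<beta>: "inner \<beta> \<beta> = 2" and \<gamma>\<gamma>: "inner \<gamma> \<gamma> = 2"
      and off: "\<forall>i<rank X + 2. \<forall>j<rank X + 2. i \<noteq> j \<longrightarrow>
        cartan_of (rank X + 2) (ext_family \<beta> \<gamma> \<alpha>) $$ (i, j) \<in> {0, -1}"
    for \<beta> \<gamma> :: 'a
  proof -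
    note pairings = ext_family_pairings[OF off \<beta>\<beta> \<gamma>\<gamma>]
    have "\<beta> = \<gamma>"
      using eq_if_inner_eq_on_spanning[OF spans]
        pairings_eq_attached[OF inj spans gram \<beta>\<beta> pairings(2)]
        pairings_eq_attached[OF inj spans gram \<gamma>\<gamma> pairings(3)]
      by simp
    with \<beta>\<beta> pairings(1) show False by simp
  qed
  then show ?thesis unfolding Let_def by blast
qed

end
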